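(* Let $d\ge1$ and $\delta\in(0,1]$. For $x\in\mathbb{S}^{d-1}$ let $x'_i=\lfloor x_i\sqrt d/\delta+\tfrac12\rfloor\,\delta/\sqrt d$ for $i=1,\dots,d$, and let $f(x)=x'/\|x'\|_2$. Let $\alpha',\beta'\in[0,1]$ with $\alpha'>\beta'$, and suppose \[ \delta<\frac{\alpha'-\beta'}{\sqrt{2-2\alpha'}+\sqrt{2-2\beta'}} . \] Then there exists $t\in\mathbb{R}$ such that for all $x,y\in\mathbb{S}^{d-1}$: - $\langle x,y\rangle\ge\alpha'$ implies $\langle f(x),f(y)\rangle\ge t$; - $\langle x,y\rangle\le\beta'$ implies $\langle f(x),f(y)\rangle<t$.
   Context: $\mathbb{S}^{d-1}$ denotes the Euclidean unit sphere in $\mathbb{R}^d$. *)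

theory Defs
  imports "HOL-Analysis.Analysis"
begin

definition grid_round :: "real \<Rightarrow> real ^ 'n \<Rightarrow> real ^ 'n" where
  "grid_round \<delta> x = (\<chi> i. real_of_int \<lfloor>x $ i * sqrt (real CARD('n)) / \<delta> + 1/2\<rfloor>
                              * \<delta> / sqrt (real CARD('n)))"

definition grid_proj :: "real \<Rightarrow> real ^ 'n \<Rightarrow> real ^ 'n" where
  "grid_proj \<delta> x = (1 / norm (grid_round \<delta> x)) *\<^sub>R grid_round \<delta> x"

end

theory Submission
  imports Defs
begin

text \<open>Measure distances on the unit sphere by the angle arccos \<langle>x, y\<rangle>, which satisfies the
  triangle inequality. Rounding moves x by at most \<delta>/2 in norm, so after normalising f(x) is
  within angle \<eta> = arcsin (\<delta>/2) of x, and f changes every angle by at most 2\<eta>. With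
  A = arccos \<alpha>' and B = arccos \<beta>', the identity sqrt (2 - 2 cos A) = 2 sin (A/2) turns the
  hypothesis on \<delta> into \<delta>/2 < (sin (B/2) - sin (A/2)) / 2 \<le> sin ((B - A)/4), i.e. 4\<eta> < B - A.
  Hence t = cos (A + 2\<eta>) separates the two cases.\<close>

definition sphere_angle :: "'a::real_inner \<Rightarrow> 'a \<Rightarrow> real" where
  "sphere_angle u v = arccos (u \<bullet> v)"

lemma abs_inner_le_one:
  fixes u v :: "'a::real_inner"
  assumes "norm u = 1" "norm v = 1"
  shows "\<bar>u \<bullet> v\<bar> \<le> 1"
  using Cauchy_Schwarz_ineq2[of u v] assms by simp

lemma
  fixes u v :: "'a::real_inner"
  assumes "norm u = 1" "norm v = 1"
  shows sphere_angle_nonneg: "0 \<le> sphere_angle u v"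
    and sphere_angle_le_pi: "sphere_angle u v \<le> pi"
    and cos_sphere_angle: "cos (sphere_angle u v) = u \<bullet> v"
    and sin_sphere_angle: "sin (sphere_angle u v) = sqrt (1 - (u \<bullet> v)\<^sup>2)"
  using abs_inner_le_one[OF assms] unfolding sphere_angle_def
  by (auto intro!: arccos_lbound arccos_ubound cos_arccos sin_arccos_abs)

lemma sphere_angle_commute: "sphere_angle u v = sphere_angle v u"
  unfolding sphere_angle_def by (simp add: inner_commute)

lemma sphere_angle_le_arccos:
  fixes u v :: "'a::real_inner"
  assumes "norm u = 1" "norm v = 1" "-1 \<le> c" "c \<le> u \<bullet> v"
  shows "sphere_angle u v \<le> arccos c"
  using abs_inner_le_one[OF assms(1,2)] assms(3,4) unfolding sphere_angle_def
  by (intro arccos_le_arccos) auto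

lemma arccos_le_sphere_angle:
  fixes u v :: "'a::real_inner"
  assumes "norm u = 1" "norm v = 1" "u \<bullet> v \<le> c" "c \<le> 1"
  shows "arccos c \<le> sphere_angle u v"
  using abs_inner_le_one[OF assms(1,2)] assms(3,4) unfolding sphere_angle_def
  by (intro arccos_le_arccos) auto

lemma cos_add_sphere_angle_le_inner:
  fixes u v w :: "'a::real_inner"
  assumes u: "norm u = 1" and v: "norm v = 1" and w: "norm w = 1"
  shows "cos (sphere_angle u v + sphere_angle v w) \<le> u \<bullet> w"
proof -
  define a where "a = u \<bullet> v"
  define b where "b = v \<bullet> w"
  define p where "p = u - a *\<^sub>R v"
  define q where "q = w - b *\<^sub>R v"
  have unit: "u \<bullet> u = 1" "v \<bullet> v = 1" "w \<bullet> w = 1"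
    using u v w by (simp_all add: dot_square_norm)
  have "p \<bullet> p = 1 - a\<^sup>2" "q \<bullet> q = 1 - b\<^sup>2" and uw: "u \<bullet> w = a * b + p \<bullet> q"
    using unit unfolding p_def q_def a_def b_def
    by (simp_all add: inner_diff_left inner_diff_right inner_commute power2_eq_square algebra_simps)
  then have "norm p * norm q = sqrt (1 - a\<^sup>2) * sqrt (1 - b\<^sup>2)"
    by (simp add: norm_eq_sqrt_inner)
  moreover have "- (norm p * norm q) \<le> p \<bullet> q"
    using Cauchy_Schwarz_ineq2[of p q] by linarith
  ultimately show ?thesis
    using u v w uw by (simp add: cos_add cos_sphere_angle sin_sphere_angle a_def b_def)
qed

lemma sphere_angle_triangle:
  fixes u v w :: "'a::real_inner"
  assumes u: "norm u = 1" and v: "norm v = 1" and w: "norm w = 1"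
  shows "sphere_angle u w \<le> sphere_angle u v + sphere_angle v w"
proof (cases "sphere_angle u v + sphere_angle v w \<le> pi")
  case False
  then show ?thesis using sphere_angle_le_pi[OF u w] by linarith
next
  case True
  let ?s = "sphere_angle u v + sphere_angle v w"
  have "sphere_angle u w \<le> arccos (cos ?s)"
    using cos_add_sphere_angle_le_inner[OF u v w] by (intro sphere_angle_le_arccos u w) auto
  also have "\<dots> = ?s"
    using True sphere_angle_nonneg u v w by (intro arccos_cos) (auto intro: add_nonneg_nonneg)
  finally show ?thesis .
qed

lemma abs_sphere_angle_diff_le:
  fixes u v u' v' :: "'a::real_inner"
  assumes "norm u = 1" "norm v = 1" "norm u' = 1" "norm v' = 1"
  shows "\<bar>sphere_angle u' v' - sphere_angle u v\<bar> \<le> sphere_angle u u' + sphere_angle v v'"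
  using sphere_angle_triangle[of u' u v'] sphere_angle_triangle[of u v v']
    sphere_angle_triangle[of u u' v] sphere_angle_triangle[of u' v' v]
    sphere_angle_commute[of u u'] sphere_angle_commute[of v v'] assms
  by linarith

lemma threshold_of_abs_sphere_angle_diff_leation:
  fixes f :: "'a::real_inner \<Rightarrow> 'a"
  assumes f: "\<And>x. norm x = 1 \<Longrightarrow> norm (f x) = 1 \<and> sphere_angle x (f x) \<le> \<eta>"
    and sep: "4 * \<eta> < arccos \<beta> - arccos \<alpha>"
    and "-1 \<le> \<beta>" "\<beta> \<le> \<alpha>" "\<alpha> \<le> 1"
  shows "\<exists>t. \<forall>x y. norm x = 1 \<longrightarrow> norm y = 1 \<longrightarrow>
           (\<alpha> \<le> x \<bullet> y \<longrightarrow> t \<le> f x \<bullet> f y) \<and> (x \<bullet> y \<le> \<beta> \<longrightarrow> f x \<bullet> f y < t)"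
proof (intro exI allI impI conjI)
  fix x y :: 'a
  assume x: "norm x = 1" and y: "norm y = 1"
  have fx: "norm (f x) = 1" and fy: "norm (f y) = 1" using f x y by blast+
  have "0 \<le> \<eta>" using f[OF x] sphere_angle_nonneg[OF x fx] by linarith
  have close: "\<bar>sphere_angle (f x) (f y) - sphere_angle x y\<bar> \<le> 2 * \<eta>"
    using abs_sphere_angle_diff_le[OF x y fx fy] f[OF x] f[OF y] by linarith
  have B: "arccos \<beta> \<le> pi" and A: "0 \<le> arccos \<alpha>"
    using assms(3-5) by (auto intro!: arccos_lbound arccos_ubound)
  show "cos (arccos \<alpha> + 2 * \<eta>) \<le> f x \<bullet> f y" if "\<alpha> \<le> x \<bullet> y"
  proof -
    have "sphere_angle x y \<le> arccos \<alpha>"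
      using that assms(3,4) by (intro sphere_angle_le_arccos x y) auto
    then have "cos (arccos \<alpha> + 2 * \<eta>) \<le> cos (sphere_angle (f x) (f y))"
      using close sep B \<open>0 \<le> \<eta>\<close> sphere_angle_nonneg[OF fx fy]
      by (intro cos_monotone_0_pi_le) auto
    then show ?thesis using cos_sphere_angle[OF fx fy] by simp
  qed
  show "f x \<bullet> f y < cos (arccos \<alpha> + 2 * \<eta>)" if "x \<bullet> y \<le> \<beta>"
  proof -
    have "arccos \<beta> \<le> sphere_angle x y"
      using that assms(4,5) by (intro arccos_le_sphere_angle x y) auto
    then have "cos (sphere_angle (f x) (f y)) < cos (arccos \<alpha> + 2 * \<eta>)"
      using close sep A \<open>0 \<le> \<eta>\<close> sphere_angle_le_pi[OF fx fy]
      by (intro cos_monotone_0_pi) auto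
    then show ?thesis using cos_sphere_angle[OF fx fy] by simp
  qed
qed

lemma inner_sgn_ge_sqrt:
  fixes x y :: "'a::real_inner"
  assumes x: "norm x = 1" and close: "norm (y - x) \<le> r" and "r < 1"
  shows "y \<noteq> 0" and "sqrt (1 - r\<^sup>2) \<le> x \<bullet> sgn y"
proof -
  define s where "s = x \<bullet> y"
  define N where "N = (norm y)\<^sup>2"
  have "0 \<le> r" using close norm_ge_zero[of "y - x"] by linarith
  have "norm x \<le> norm y + norm (y - x)"
    using norm_triangle_ineq[of y "x - y"] by (simp add: norm_minus_commute)
  then have "0 < norm y" using x close \<open>r < 1\<close> by linarith
  then show "y \<noteq> 0" by auto
  have "x \<bullet> x = 1" using x by (simp add: dot_square_norm)
  then have "(norm (y - x))\<^sup>2 = N - 2 * s + 1"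
    unfolding N_def s_def
    by (simp add: power2_norm_eq_inner inner_diff_left inner_diff_right inner_commute)
  moreover have "(norm (y - x))\<^sup>2 \<le> r\<^sup>2" using close by (simp add: power_mono)
  ultimately have "N + (1 - r\<^sup>2) \<le> 2 * s" by linarith
  moreover have "sqrt (N * (1 - r\<^sup>2)) \<le> (N + (1 - r\<^sup>2)) / 2"
    using \<open>0 \<le> r\<close> \<open>r < 1\<close> unfolding N_def
    by (intro arith_geo_mean_sqrt) (auto simp: abs_square_le_1)
  ultimately have "sqrt (1 - r\<^sup>2) * norm y \<le> s"
    using \<open>0 < norm y\<close> unfolding N_def by (simp add: real_sqrt_mult mult.commute)
  moreover have "x \<bullet> sgn y = s / norm y"
    unfolding s_def by (simp add: sgn_div_norm divide_inverse_commute)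
  ultimately show "sqrt (1 - r\<^sup>2) \<le> x \<bullet> sgn y"
    using \<open>0 < norm y\<close> by (simp add: pos_le_divide_eq)
qed

lemma sphere_angle_sgn_le_arcsin:
  fixes x y :: "'a::real_inner"
  assumes x: "norm x = 1" and close: "norm (y - x) \<le> r" and "r < 1"
  shows "norm (sgn y) = 1" and "sphere_angle x (sgn y) \<le> arcsin r"
proof -
  show y: "norm (sgn y) = 1" using inner_sgn_ge_sqrt(1)[OF assms] by (simp add: norm_sgn)
  have "0 \<le> r" using close norm_ge_zero[of "y - x"] by linarith
  have "0 \<le> sqrt (1 - r\<^sup>2)"
    using \<open>0 \<le> r\<close> \<open>r < 1\<close> by (simp add: abs_square_le_1)
  then have "sphere_angle x (sgn y) \<le> arccos (sqrt (1 - r\<^sup>2))"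
    using inner_sgn_ge_sqrt(2)[OF assms] by (intro sphere_angle_le_arccos x y) linarith+
  also have "\<dots> = arcsin r" using \<open>0 \<le> r\<close> \<open>r < 1\<close> by (simp add: arcsin_arccos_sqrt_pos)
  finally show "sphere_angle x (sgn y) \<le> arcsin r" .
qed

lemma norm_le_sqrt_card_mult_cart:
  fixes x :: "real ^ 'n"
  assumes "\<And>i. \<bar>x $ i\<bar> \<le> c"
  shows "norm x \<le> sqrt (real CARD('n)) * c"
proof -
  have "0 \<le> c" using assms[of undefined] by linarith
  have "norm x \<le> L2_set (\<lambda>_. c) (UNIV :: 'n set)"
    unfolding norm_vec_def using assms by (intro L2_set_mono) auto
  also have "\<dots> = sqrt (real CARD('n)) * c"
    using \<open>0 \<le> c\<close> by (simp add: L2_set_def real_sqrt_mult)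
  finally show ?thesis .
qed

lemma abs_round_mult_sub_le:
  fixes z c :: real
  assumes "0 < c"
  shows "\<bar>of_int \<lfloor>z / c + 1/2\<rfloor> * c - z\<bar> \<le> c / 2"
proof -
  have "of_int \<lfloor>z / c + 1/2\<rfloor> * c - z = (of_int \<lfloor>z / c + 1/2\<rfloor> - z / c) * c"
    using assms by (simp add: left_diff_distrib)
  also have "\<bar>\<dots>\<bar> \<le> 1/2 * c"
    unfolding abs_mult using assms by (intro mult_mono) linarith+
  finally show ?thesis by simp
qed

lemma norm_grid_round_sub_le:
  fixes x :: "real ^ 'n"
  assumes "0 < \<delta>"
  shows "norm (grid_round \<delta> x - x) \<le> \<delta> / 2"
proof -
  define c where "c = \<delta> / sqrt (real CARD('n))"
  have "0 < c" using assms unfolding c_def by simp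
  have "\<bar>(grid_round \<delta> x - x) $ i\<bar> \<le> c / 2" for i
    using abs_round_mult_sub_le[OF \<open>0 < c\<close>, of "x $ i"]
    unfolding grid_round_def c_def by (simp add: mult.commute)
  then have "norm (grid_round \<delta> x - x) \<le> sqrt (real CARD('n)) * (c / 2)"
    by (rule norm_le_sqrt_card_mult_cart)
  also have "\<dots> = \<delta> / 2" unfolding c_def by simp
  finally show ?thesis .
qed

lemma grid_proj_eq_sgn: "grid_proj \<delta> x = sgn (grid_round \<delta> x)"
  unfolding grid_proj_def by (simp add: sgn_div_norm divide_inverse_commute)

lemma
  fixes x :: "real ^ 'n"
  assumes "norm x = 1" "0 < \<delta>" "\<delta> < 2"
  shows norm_grid_proj: "norm (grid_proj \<delta> x) = 1"
    and sphere_angle_grid_proj_le: "sphere_angle x (grid_proj \<delta> x) \<le> arcsin (\<delta> / 2)"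
  using sphere_angle_sgn_le_arcsin[OF assms(1) norm_grid_round_sub_le] assms(2,3)
  unfolding grid_proj_eq_sgn by auto

lemma sqrt_two_sub_two_cos:
  assumes "0 \<le> A" "A \<le> pi"
  shows "sqrt (2 - 2 * cos A) = 2 * sin (A / 2)"
proof -
  have "2 - 2 * cos A = (2 * sin (A / 2))\<^sup>2"
    using cos_double_sin[of "A / 2"] by (simp add: power2_eq_square)
  moreover have "0 \<le> sin (A / 2)" using assms by (intro sin_ge_zero) auto
  ultimately show ?thesis using real_sqrt_abs[of "2 * sin (A / 2)"] by (simp only:)
qed

lemma four_arcsin_lt_arccos_diff:
  assumes "-1 \<le> \<beta>" "\<beta> < \<alpha>" "\<alpha> \<le> 1" "0 \<le> \<delta>"
    and \<delta>: "\<delta> < (\<alpha> - \<beta>) / (sqrt (2 - 2 * \<alpha>) + sqrt (2 - 2 * \<beta>))"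
  shows "4 * arcsin (\<delta> / 2) < arccos \<beta> - arccos \<alpha>"
proof -
  define A B where "A = arccos \<alpha>" and "B = arccos \<beta>"
  define a b where "a = sin (A / 2)" and "b = sin (B / 2)"
  define Q where "Q = (B - A) / 4"
  have angles: "cos A = \<alpha>" "cos B = \<beta>" "0 \<le> A" "A < B" "A \<le> pi" "B \<le> pi"
    using assms(1-3) unfolding A_def B_def
    by (auto intro!: cos_arccos arccos_lbound arccos_less_arccos arccos_ubound)
  have "0 < Q" "Q \<le> pi / 2" using angles unfolding Q_def by auto
  then have "0 \<le> sin Q" by (intro sin_ge_zero) auto
  have "sqrt (2 - 2 * \<alpha>) + sqrt (2 - 2 * \<beta>) = 2 * (b + a)"
    using sqrt_two_sub_two_cos[of A] sqrt_two_sub_two_cos[of B] angles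
    unfolding a_def b_def by simp
  moreover have "\<alpha> - \<beta> = 2 * (b - a) * (b + a)"
    using cos_double_sin[of "A / 2"] cos_double_sin[of "B / 2"] angles(1,2)
    unfolding a_def b_def by (simp add: power2_eq_square algebra_simps)
  moreover have "0 < b + a"
    using angles unfolding a_def b_def by (intro add_pos_nonneg sin_gt_zero sin_ge_zero) auto
  ultimately have "(\<alpha> - \<beta>) / (sqrt (2 - 2 * \<alpha>) + sqrt (2 - 2 * \<beta>)) = b - a"
    by (simp add: field_simps)
  then have "\<delta> < b - a" using \<delta> by simp
  also have "\<dots> = 2 * sin Q * cos ((A + B) / 4)"
    unfolding a_def b_def Q_def by (simp add: sin_diff_sin field_simps)
  also have "\<dots> \<le> 2 * sin Q"
    using \<open>0 \<le> sin Q\<close> by (intro mult_left_le cos_le_one) simp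
  finally have "arcsin (\<delta> / 2) < arcsin (sin Q)"
    using \<open>0 \<le> \<delta>\<close> by (intro arcsin_less_arcsin) auto
  also have "\<dots> = Q" using \<open>0 < Q\<close> \<open>Q \<le> pi / 2\<close> by (intro arcsin_sin) auto
  finally show ?thesis unfolding Q_def A_def B_def by simp
qed

theorem mainTheorem6:
  fixes \<delta> \<alpha> \<beta> :: real
  assumes "0 < \<delta>" "\<delta> \<le> 1"
    and "0 \<le> \<alpha>" "\<alpha> \<le> 1" "0 \<le> \<beta>" "\<beta> \<le> 1" "\<beta> < \<alpha>"
    and "\<delta> < (\<alpha> - \<beta>) / (sqrt (2 - 2 * \<alpha>) + sqrt (2 - 2 * \<beta>))"
  shows "\<exists>t::real. \<forall>x y :: real ^ 'n. norm x = 1 \<longrightarrow> norm y = 1 \<longrightarrow>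
           (x \<bullet> y \<ge> \<alpha> \<longrightarrow> grid_proj \<delta> x \<bullet> grid_proj \<delta> y \<ge> t) \<and>
           (x \<bullet> y \<le> \<beta> \<longrightarrow> grid_proj \<delta> x \<bullet> grid_proj \<delta> y < t)"
proof (rule threshold_of_abs_sphere_angle_diff_leation)
  show "4 * arcsin (\<delta> / 2) < arccos \<beta> - arccos \<alpha>"
    using assms by (intro four_arcsin_lt_arccos_diff) auto
  show "norm (grid_proj \<delta> x) = 1 \<and> sphere_angle x (grid_proj \<delta> x) \<le> arcsin (\<delta> / 2)"
    if "norm x = 1" for x :: "real ^ 'n"
    using that assms(1,2) by (simp add: norm_grid_proj sphere_angle_grid_proj_le)
qed (use assms in auto)

end
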